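(* Let $n\ge2$ and let $U^+$ be the subalgebra of $U_{r,s}(\mathfrak{so}_{2n+1})$ generated by $e_1,\dots,e_n$, with root vectors as in the context. Then in $U^+$: (1) $e_l\mathcal E_{i,j}=\mathcal E_{i,j}e_l$ for $i<l<j\le n$; (2) $\mathcal E_{i,l}\mathcal E_{l,j}-(rs)^2\mathcal E_{l,j}\mathcal E_{i,l}=(s^2-r^2)e_l\mathcal E_{i,j}$ for $i<l<j\le n$; (3) $\mathcal E_{i,j}\mathcal E_{k,l}=\mathcal E_{k,l}\mathcal E_{i,j}$ for $i<k\le l<j\le n$; (4) $\mathcal E_{i,j}\mathcal E_{l,j}=s^2\mathcal E_{l,j}\mathcal E_{i,j}$ for $i<l\le j<n$; (5) $\mathcal E_{i,l}\mathcal E_{i,j}=s^2\mathcal E_{i,j}\mathcal E_{i,l}$ for $i\le l<j\le n$; (6) $e_l\mathcal E_{i,j'}=\mathcal E_{i,j'}e_l$ for $i<l$, $l+1<j\le n$; (7) $\mathcal E_{i,l}\mathcal E_{l,j'}-(rs)^2\mathcal E_{l,j'}\mathcal E_{i,l}=(s^2-r^2)e_l\mathcal E_{i,j'}$ for $i<l$, $l+1<j\le n$; (8) $\mathcal E_{i,j'}\mathcal E_{k,l}=\mathcal E_{k,l}\mathcal E_{i,j'}$ for $i<k\le l$, $l+1<j\le n$; (9) $\mathcal E_{i,l}\mathcal E_{i,j'}=s^2\mathcal E_{i,j'}\mathcal E_{i,l}$ for $i\le l$, $l+1<j\le n$.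
   Context: Let $r,s\in\mathbb C^*$ with $r^3\ne s^3$, $r^4\ne s^4$, $\mathbb K=\mathbb Q(r,s)$. $U_{r,s}(\mathfrak{so}_{2n+1})$ is the $\mathbb K$-algebra generated by $e_i,f_i,\omega_i^{\pm1},\omega_i'^{\pm1}$ ($1\le i\le n$) with: $\omega$'s commute, invertible; $\omega_je_i\omega_j^{-1}=\langle\omega_i',\omega_j\rangle e_i$, $\omega_jf_i\omega_j^{-1}=\langle\omega_i',\omega_j\rangle^{-1}f_i$, $\omega_j'e_i\omega_j'^{-1}=\langle\omega_j',\omega_i\rangle^{-1}e_i$, $\omega_j'f_i\omega_j'^{-1}=\langle\omega_j',\omega_i\rangle f_i$, where $\langle\omega_i',\omega_i\rangle=r^2s^{-2}$ ($i<n$), $\langle\omega_n',\omega_n\rangle=rs^{-1}$, $\langle\omega_i',\omega_{i+1}\rangle=r^{-2}$, $\langle\omega_{i+1}',\omega_i\rangle=s^2$ ($i<n$), others $1$; $e_if_j-f_je_i=\delta_{ij}(\omega_i-\omega_i')/(r_i-s_i)$ ($r_i=r^2,s_i=s^2$ for $i<n$; $r_n=r,s_n=s$); Serre relations $(\mathrm{ad}_le_i)^{1-a_{ij}}(e_j)=0=(\mathrm{ad}_rf_i)^{1-a_{ij}}(f_j)$, $i\ne j$, with $(a_{ij})$ the $B_n$ Cartan matrix ($a_{ii}=2$, $a_{i,i+1}=a_{i+1,i}=-1$ for $i\le n-2$, $a_{n-1,n}=-1$, $a_{n,n-1}=-2$, else $0$), $\mathrm{ad}_l(a)(b)=\sum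 a_{(1)}bS(a_{(2)})$, $\mathrm{ad}_r(a)(b)=\sum S(a_{(1)})ba_{(2)}$, for the Hopf structure $\Delta(\omega)=\omega\otimes\omega$, $\Delta(e_i)=e_i\otimes1+\omega_i\otimes e_i$, $\Delta(f_i)=1\otimes f_i+f_i\otimes\omega_i'$, $S(e_i)=-\omega_i^{-1}e_i$, $S(f_i)=-f_i\omega_i'^{-1}$. Root vectors: $\mathcal E_{i,i}=e_i$, $\mathcal E_{i,j}=e_i\mathcal E_{i+1,j}-r^2\mathcal E_{i+1,j}e_i$ ($1\le i<j\le n$), $\mathcal E_{i,n'}=\mathcal E_{i,n}e_n-rs\,e_n\mathcal E_{i,n}$ ($i\le n-1$), $\mathcal E_{i,j'}=\mathcal E_{i,(j+1)'}e_j-s^{-2}e_j\mathcal E_{i,(j+1)'}$ ($1\le i<j\le n-1$). *)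

theory Defs
  imports Complex_Main
begin

inductive_set Kfield :: "complex \<Rightarrow> complex \<Rightarrow> complex set" for r s where
  K_r: "r \<in> Kfield r s"
| K_s: "s \<in> Kfield r s"
| K_one: "1 \<in> Kfield r s"
| K_add: "x \<in> Kfield r s \<Longrightarrow> y \<in> Kfield r s \<Longrightarrow> x + y \<in> Kfield r s"
| K_mult: "x \<in> Kfield r s \<Longrightarrow> y \<in> Kfield r s \<Longrightarrow> x * y \<in> Kfield r s"
| K_uminus: "x \<in> Kfield r s \<Longrightarrow> - x \<in> Kfield r s"
| K_inverse: "x \<in> Kfield r s \<Longrightarrow> inverse x \<in> Kfield r s"

text \<open>A unital ring 'a together with a ring homomorphism from K into its centre,
  i.e. a K-algebra structure (scalar multiplication c.a is sc c * a).\<close>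
definition K_algebra :: "complex \<Rightarrow> complex \<Rightarrow> (complex \<Rightarrow> 'a::ring_1) \<Rightarrow> bool" where
  "K_algebra r s sc \<longleftrightarrow>
     (\<forall>x\<in>Kfield r s. \<forall>y\<in>Kfield r s. sc (x + y) = sc x + sc y \<and> sc (x * y) = sc x * sc y)
   \<and> sc 1 = 1
   \<and> (\<forall>x\<in>Kfield r s. \<forall>a. sc x * a = a * sc x)"

text \<open>The pairing value \<langle>\<omega>'_i, \<omega>_j\<rangle> for so_{2n+1}, indices in {1..n}.\<close>
definition pairing :: "nat \<Rightarrow> complex \<Rightarrow> complex \<Rightarrow> nat \<Rightarrow> nat \<Rightarrow> complex" where
  "pairing n r s i j =
     (if i = j then (if i < n then r^2 * inverse (s^2) else r * inverse s)
      else if j = i + 1 then inverse (r^2)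
      else if i = j + 1 then s^2
      else 1)"

definition cartan_B :: "nat \<Rightarrow> nat \<Rightarrow> nat \<Rightarrow> int" where
  "cartan_B n i j =
     (if i = j then 2
      else if (j = i + 1 \<and> i \<le> n - 2) \<or> (i = j + 1 \<and> j \<le> n - 2) then -1
      else if i = n - 1 \<and> j = n then -1
      else if i = n \<and> j = n - 1 then -2
      else 0)"

definition r_i :: "nat \<Rightarrow> complex \<Rightarrow> nat \<Rightarrow> complex" where
  "r_i n r i = (if i < n then r^2 else r)"

definition s_i :: "nat \<Rightarrow> complex \<Rightarrow> nat \<Rightarrow> complex" where
  "s_i n s i = (if i < n then s^2 else s)"

text \<open>Left adjoint action of e_i: ad_l(e_i)(b) = e_i b S(1) + \<omega>_i b S(e_i)
  = e_i b - \<omega>_i b \<omega>_i^{-1} e_i.\<close>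
definition ad_l :: "(nat \<Rightarrow> 'a::ring_1) \<Rightarrow> (nat \<Rightarrow> 'a) \<Rightarrow> (nat \<Rightarrow> 'a) \<Rightarrow> nat \<Rightarrow> 'a \<Rightarrow> 'a" where
  "ad_l e w winv i b = e i * b - w i * b * winv i * e i"

text \<open>Right adjoint action of f_i: ad_r(f_i)(b) = S(1) b f_i + S(f_i) b \<omega>'_i
  = b f_i - f_i \<omega>'_i^{-1} b \<omega>'_i.\<close>
definition ad_r :: "(nat \<Rightarrow> 'a::ring_1) \<Rightarrow> (nat \<Rightarrow> 'a) \<Rightarrow> (nat \<Rightarrow> 'a) \<Rightarrow> nat \<Rightarrow> 'a \<Rightarrow> 'a" where
  "ad_r f w' w'inv i b = b * f i - f i * w'inv i * b * w' i"

definition Urs_relations ::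
  "nat \<Rightarrow> complex \<Rightarrow> complex \<Rightarrow> (complex \<Rightarrow> 'a::ring_1) \<Rightarrow> (nat \<Rightarrow> 'a) \<Rightarrow> (nat \<Rightarrow> 'a)
   \<Rightarrow> (nat \<Rightarrow> 'a) \<Rightarrow> (nat \<Rightarrow> 'a) \<Rightarrow> (nat \<Rightarrow> 'a) \<Rightarrow> (nat \<Rightarrow> 'a) \<Rightarrow> bool" where
  "Urs_relations n r s sc e f w w' winv w'inv \<longleftrightarrow>
     K_algebra r s sc
   \<and> (\<forall>i\<in>{1..n}. w i * winv i = 1 \<and> winv i * w i = 1 \<and> w' i * w'inv i = 1 \<and> w'inv i * w' i = 1)
   \<and> (\<forall>i\<in>{1..n}. \<forall>j\<in>{1..n}. w i * w j = w j * w i \<and> w i * w' j = w' j * w i \<and> w' i * w' j = w' j * w' i)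
   \<and> (\<forall>i\<in>{1..n}. \<forall>j\<in>{1..n}.
        w j * e i * winv j = sc (pairing n r s i j) * e i
      \<and> w j * f i * winv j = sc (inverse (pairing n r s i j)) * f i
      \<and> w' j * e i * w'inv j = sc (inverse (pairing n r s j i)) * e i
      \<and> w' j * f i * w'inv j = sc (pairing n r s j i) * f i)
   \<and> (\<forall>i\<in>{1..n}. \<forall>j\<in>{1..n}.
        e i * f j - f j * e i =
          (if i = j then sc (inverse (r_i n r i - s_i n s i)) * (w i - w' i) else 0))
   \<and> (\<forall>i\<in>{1..n}. \<forall>j\<in>{1..n}. i \<noteq> j \<longrightarrow>
        (ad_l e w winv i ^^ nat (1 - cartan_B n i j)) (e j) = 0
      \<and> (ad_r f w' w'inv i ^^ nat (1 - cartan_B n i j)) (f j) = 0)"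

fun rootE_rec :: "(complex \<Rightarrow> 'a::ring_1) \<Rightarrow> complex \<Rightarrow> (nat \<Rightarrow> 'a) \<Rightarrow> nat \<Rightarrow> nat \<Rightarrow> 'a" where
  "rootE_rec sc r e i 0 = e i"
| "rootE_rec sc r e i (Suc k) =
     e i * rootE_rec sc r e (i + 1) k - sc (r^2) * rootE_rec sc r e (i + 1) k * e i"

definition rootE :: "(complex \<Rightarrow> 'a::ring_1) \<Rightarrow> complex \<Rightarrow> (nat \<Rightarrow> 'a) \<Rightarrow> nat \<Rightarrow> nat \<Rightarrow> 'a" where
  "rootE sc r e i j = rootE_rec sc r e i (j - i)"

text \<open>Root vectors E_{i,j'}: E_{i,n'} = E_{i,n} e_n - rs e_n E_{i,n},
  E_{i,j'} = E_{i,(j+1)'} e_j - s^{-2} e_j E_{i,(j+1)'}; recursion on k = n - j.\<close>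
fun rootE'_rec :: "nat \<Rightarrow> (complex \<Rightarrow> 'a::ring_1) \<Rightarrow> complex \<Rightarrow> complex \<Rightarrow> (nat \<Rightarrow> 'a) \<Rightarrow> nat \<Rightarrow> nat \<Rightarrow> 'a" where
  "rootE'_rec n sc r s e i 0 =
     rootE sc r e i n * e n - sc (r * s) * e n * rootE sc r e i n"
| "rootE'_rec n sc r s e i (Suc k) =
     rootE'_rec n sc r s e i k * e (n - Suc k)
     - sc (inverse (s^2)) * e (n - Suc k) * rootE'_rec n sc r s e i k"

definition rootE' :: "nat \<Rightarrow> (complex \<Rightarrow> 'a::ring_1) \<Rightarrow> complex \<Rightarrow> complex \<Rightarrow> (nat \<Rightarrow> 'a) \<Rightarrow> nat \<Rightarrow> nat \<Rightarrow> 'a" where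
  "rootE' n sc r s e i j = rootE'_rec n sc r s e i (n - j)"

end

theory Submission
  imports Defs
begin

text \<open>The root vectors are iterated q-brackets [x, y]_a = xy - a yx with the central scalar
  a = r^2, and every identity of the lemma is a formal consequence of three kinds of relations
  among e_1, ..., e_n: e_i and e_j commute for |i - j| > 1, and the two cubic relations
  e_i [e_i, e_(i+1)]_a = s^2 [e_i, e_(i+1)]_a e_i and
  [e_i, e_(i+1)]_a e_(i+1) = s^2 e_(i+1) [e_i, e_(i+1)]_a,
  which are the Serre relations (ad e_i)^2 e_j = 0 for adjacent i, j in another form.
  The key step (1) holds because (r^2 + s^2)(e_l E_ij - E_ij e_l) is a combination of the two cubic
  relations; (2)-(5) then follow by induction along the splitting E_ij = [E_ik, E_(k+1)j]_a.
  E_ij' is E_in bracketed on the right with e_n, ..., e_j; everything occurring in (6)-(9)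
  commutes with these e_m, so (6)-(9) are (1), (2), (3), (5) for j = n pushed through
  the brackets.\<close>

definition central :: "'a::ring_1 \<Rightarrow> bool" where
  "central c \<longleftrightarrow> (\<forall>x. x * c = c * x)"

lemma central_commute:
  assumes "central c"
  shows "x * c = c * x" "x * (c * y) = c * (x * y)"
  using assms by (simp_all add: central_def) (metis mult.assoc)

lemma central_1: "central 1"
  by (simp add: central_def)

lemma central_mult: "central b \<Longrightarrow> central c \<Longrightarrow> central (b * c)"
  unfolding central_def by (metis mult.assoc)

lemma central_diff: "central b \<Longrightarrow> central c \<Longrightarrow> central (b - c)"
  unfolding central_def by (metis left_diff_distrib right_diff_distrib)

lemma central_uminus: "central c \<Longrightarrow> central (- c)"
  unfolding central_def by simp

definition qbr :: "'a::ring_1 \<Rightarrow> 'a \<Rightarrow> 'a \<Rightarrow> 'a" where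
  "qbr c x y = x * y - c * y * x"

lemma qbr_eq_0_iff: "qbr c x y = 0 \<longleftrightarrow> x * y = c * y * x"
  by (simp add: qbr_def)

lemma qbr_mult_left:
  assumes "central c" and "central p"
  shows "qbr c (p * x) y = p * qbr c x y"
  by (simp add: qbr_def algebra_simps central_commute[OF assms(2), of y]
    central_commute[OF assms(1), of p])

lemma qbr_mult_right:
  assumes "central c" and "central q"
  shows "qbr c x (q * y) = q * qbr c x y"
  by (simp add: qbr_def algebra_simps central_commute[OF assms(2), of x]
    central_commute[OF assms(1), of q])

lemma qbr_jacobi:
  assumes a: "central a" and xz: "x * z = z * x"
  shows "qbr a x (qbr a y z) = qbr a (qbr a x y) z"
proof -
  have "x * (z * t) = z * (x * t)" for t by (metis xz mult.assoc)
  then show ?thesis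
    by (simp add: qbr_def algebra_simps xz central_commute[OF a, of x]
      central_commute[OF a, of y] central_commute[OF a, of z])
qed

lemma qbr_qcommute_left:
  assumes a: "central a" and b: "central b" and c: "central c"
    and zx: "z * x = b * x * z" and zy: "z * y = c * y * z"
  shows "z * qbr a x y = (b * c) * qbr a x y * z"
proof -
  have "z * (x * t) = b * (x * (z * t))" "z * (y * t) = c * (y * (z * t))" for t
    using zx zy by (metis mult.assoc)+
  then show ?thesis
    by (simp add: qbr_def algebra_simps zx zy central_commute[OF a, of x] central_commute[OF a, of y]
      central_commute[OF a, of z] central_commute[OF b, of x] central_commute[OF b, of y]
      central_commute[OF b, of z] central_commute[OF c, of x] central_commute[OF c, of y]
      central_commute[OF c, of z] central_commute[OF a, of b] central_commute[OF a, of c]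
      central_commute[OF b, of c])
qed

lemma qbr_qcommute_right:
  assumes a: "central a" and b: "central b" and c: "central c"
    and xz: "x * z = b * z * x" and yz: "y * z = c * z * y"
  shows "qbr a x y * z = (b * c) * z * qbr a x y"
proof -
  have "x * (z * t) = b * (z * (x * t))" "y * (z * t) = c * (z * (y * t))" for t
    using xz yz by (metis mult.assoc)+
  then show ?thesis
    by (simp add: qbr_def algebra_simps xz yz central_commute[OF a, of x] central_commute[OF a, of y]
      central_commute[OF a, of z] central_commute[OF b, of x] central_commute[OF b, of y]
      central_commute[OF b, of z] central_commute[OF c, of x] central_commute[OF c, of y]
      central_commute[OF c, of z] central_commute[OF a, of b] central_commute[OF a, of c]
      central_commute[OF b, of c])
qed

lemma qbr_swap:
  assumes a: "central a" and b: "central b"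
  shows "qbr a x (qbr b x y) = qbr b x (qbr a x y)"
  by (simp add: qbr_def algebra_simps central_commute[OF a, of x] central_commute[OF a, of y]
      central_commute[OF b, of x] central_commute[OF b, of y] central_commute[OF a, of b])

lemma qbr_flip:
  assumes a: "central a" and ga: "g * a = 1"
  shows "qbr g y x = - g * qbr a x y"
proof -
  have "g * (a * t) = t" for t by (metis ga mult.assoc mult_1_left)
  then show ?thesis by (simp add: qbr_def algebra_simps central_commute[OF a, of y])
qed

lemma qbr_nested_eq:
  assumes a: "central a" and b: "central b"
    and uy: "u * y = b * y * u"
    and yw: "y * qbr a u z = qbr a u z * y"
  shows "qbr (a * b) u (qbr a y z) = (b - a) * y * qbr a u z"
proof -
  define w where "w = qbr a u z"
  have uy': "u * (y * t) = b * (y * (u * t))" for t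
    by (metis uy mult.assoc central_commute(2)[OF b])
  have yw': "y * (w * t) = w * (y * t)" for t by (metis yw w_def mult.assoc)
  have uz: "u * z = w + a * (z * u)" by (simp add: w_def qbr_def mult.assoc)
  have uz': "u * (z * t) = w * t + a * (z * (u * t))" for t
    by (metis uz distrib_right mult.assoc central_commute(1)[OF a])
  show ?thesis
    unfolding w_def[symmetric]
    by (simp add: qbr_def algebra_simps uy uy' uz uz' yw[folded w_def] yw' central_commute[OF a, of u]
      central_commute[OF a, of y] central_commute[OF a, of z] central_commute[OF a, of w]
      central_commute[OF b, of u] central_commute[OF b, of y] central_commute[OF b, of z]
      central_commute[OF b, of w] central_commute[OF a, of b])
qed

text \<open>With P1, P2 the two cubic relations and K the commutator of x and z, (a + b) times the
  commutator to be shown vanishing is an explicit combination of P1, P2 and K.\<close>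

lemma qbr_qbr_commute:
  assumes a: "central a" and b: "central b"
    and cancel: "\<And>X. (a + b) * X = 0 \<Longrightarrow> X = 0"
    and xz: "x * z = z * x"
    and xy: "qbr a x y * y = b * y * qbr a x y"
    and yz: "y * qbr a y z = b * qbr a y z * y"
  shows "y * qbr a (qbr a x y) z = qbr a (qbr a x y) z * y"
proof -
  define P1 where "P1 = x*y*y - (a+b)*y*x*y + a*b*y*y*x"
  define P2 where "P2 = y*y*z - (a+b)*y*z*y + a*b*z*y*y"
  define K where "K = x*z - z*x"
  note comm = central_commute[OF a, of x] central_commute[OF a, of y] central_commute[OF a, of z]
    central_commute[OF b, of x] central_commute[OF b, of y] central_commute[OF b, of z]
    central_commute[OF a, of b]
  have P1: "P1 = 0" using xy unfolding P1_def by (simp add: qbr_def algebra_simps comm)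
  have P2: "P2 = 0" using yz unfolding P2_def by (simp add: qbr_def algebra_simps comm)
  have K: "K = 0" using xz unfolding K_def by simp
  have "(a + b) * (y * qbr a (qbr a x y) z - qbr a (qbr a x y) z * y)
      = x*P2 - P1*z + a*b*(y*y*K - K*y*y + P2*x - z*P1)
        + (a+b)*(-a*(y*y*K) - a*(P2*x) + a*(y*K*y) + a*(z*P1))"
    unfolding P1_def P2_def K_def by (simp add: qbr_def algebra_simps comm)
  also have "\<dots> = 0" by (simp add: P1 P2 K)
  finally have "y * qbr a (qbr a x y) z - qbr a (qbr a x y) z * y = 0" by (rule cancel)
  then show ?thesis by simp
qed

lemma qbr_commute_left:
  assumes "central a" and "q * x = x * q" and "q * y = y * q"
  shows "q * qbr a x y = qbr a x y * q"
  using qbr_qcommute_left[OF assms(1) central_1 central_1, of q x y] assms(2,3) by simp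

fun qroot :: "'a::ring_1 \<Rightarrow> (nat \<Rightarrow> 'a) \<Rightarrow> nat \<Rightarrow> nat \<Rightarrow> 'a" where
  "qroot a e i 0 = e i"
| "qroot a e i (Suc k) = qbr a (e i) (qroot a e (i + 1) k)"

text \<open>a and b play the roles of r^2 and s^2.\<close>

locale qserre_chain =
  fixes n :: nat and e :: "nat \<Rightarrow> 'a::ring_1" and a b :: 'a
  assumes central_a: "central a" and central_b: "central b"
    and cancel: "(a + b) * X = 0 \<Longrightarrow> X = 0"
    and e_commute: "1 \<le> i \<Longrightarrow> i + 1 < j \<Longrightarrow> j \<le> n \<Longrightarrow> e i * e j = e j * e i"
    and serre_left: "1 \<le> i \<Longrightarrow> i < n \<Longrightarrow>
      e i * qbr a (e i) (e (i + 1)) = b * qbr a (e i) (e (i + 1)) * e i"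
    and serre_right: "1 \<le> i \<Longrightarrow> i + 1 < n \<Longrightarrow>
      qbr a (e i) (e (i + 1)) * e (i + 1) = b * e (i + 1) * qbr a (e i) (e (i + 1))"
begin

definition E :: "nat \<Rightarrow> nat \<Rightarrow> 'a" where
  "E i j = qroot a e i (j - i)"

lemma E_same [simp]: "E i i = e i"
  by (simp add: E_def)

lemma E_Suc: "i < j \<Longrightarrow> E i j = qbr a (e i) (E (i + 1) j)"
proof -
  assume "i < j"
  then have "j - i = Suc (j - (i + 1))" by simp
  then show ?thesis by (simp add: E_def)
qed

lemma e_commute_far:
  "1 \<le> i \<Longrightarrow> i \<le> n \<Longrightarrow> 1 \<le> j \<Longrightarrow> j \<le> n \<Longrightarrow> i + 1 < j \<or> j + 1 < i
    \<Longrightarrow> e i * e j = e j * e i"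
  using e_commute by (metis le_trans nat_le_linear not_less)

lemma e_E_commute_far:
  "1 \<le> k \<Longrightarrow> k \<le> l \<Longrightarrow> l \<le> n \<Longrightarrow> 1 \<le> m \<Longrightarrow> m \<le> n \<Longrightarrow> m + 1 < k \<or> l + 1 < m
    \<Longrightarrow> e m * E k l = E k l * e m"
proof (induction "l - k" arbitrary: k)
  case 0
  then show ?case using e_commute_far[of m k] by simp
next
  case (Suc d)
  have "e m * e k = e k * e m" using Suc.prems by (intro e_commute_far) auto
  moreover have "e m * E (k + 1) l = E (k + 1) l * e m"
    using Suc.prems Suc.hyps(2) by (intro Suc.hyps(1)) auto
  ultimately show ?case
    using Suc.hyps(2) by (simp add: E_Suc[of k l] qbr_commute_left[OF central_a])
qed

lemma E_E_commute_far:
  "1 \<le> i \<Longrightarrow> i \<le> j \<Longrightarrow> j + 1 < k \<Longrightarrow> k \<le> l \<Longrightarrow> l \<le> n \<Longrightarrow> E i j * E k l = E k l * E i j"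
proof (induction "j - i" arbitrary: i)
  case 0
  then show ?case using e_E_commute_far[of k l i] by simp
next
  case (Suc d)
  have "E k l * e i = e i * E k l" using Suc.prems e_E_commute_far[of k l i] by simp
  moreover have "E (i + 1) j * E k l = E k l * E (i + 1) j"
    using Suc.prems Suc.hyps(2) by (intro Suc.hyps(1)) auto
  ultimately have "E k l * E i j = E i j * E k l"
    using Suc.hyps(2) by (simp add: E_Suc[of i j] qbr_commute_left[OF central_a])
  then show ?case by simp
qed

lemma E_split:
  "1 \<le> i \<Longrightarrow> i \<le> k \<Longrightarrow> k < j \<Longrightarrow> j \<le> n \<Longrightarrow> E i j = qbr a (E i k) (E (k + 1) j)"
proof (induction "k - i" arbitrary: i)
  case 0
  then have "k = i" by simp
  with 0 show ?case by (simp add: E_Suc)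
next
  case (Suc d)
  have "e i * E (k + 1) j = E (k + 1) j * e i"
    using Suc.prems Suc.hyps(2) by (intro e_E_commute_far) auto
  moreover have "E (i + 1) j = qbr a (E (i + 1) k) (E (k + 1) j)"
    using Suc.prems Suc.hyps(2) by (intro Suc.hyps(1)) auto
  ultimately show ?case using Suc.prems Suc.hyps(2)
    by (simp add: E_Suc[of i j] E_Suc[of i k] qbr_jacobi[OF central_a])
qed

lemma e_E_qcommute: "1 \<le> i \<Longrightarrow> i < j \<Longrightarrow> j \<le> n \<Longrightarrow> e i * E i j = b * E i j * e i"
proof (cases "j = i + 1")
  case True
  assume "1 \<le> i" "i < j" "j \<le> n"
  with True show ?thesis using serre_left[of i] by (simp add: E_Suc)
next
  case False
  assume ij: "1 \<le> i" "i < j" "j \<le> n"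
  have "E i j = qbr a (E i (i + 1)) (E (i + 2) j)"
    using E_split[of i "i + 1" j] ij False by simp
  moreover have "e i * E i (i + 1) = b * E i (i + 1) * e i"
    using serre_left[of i] ij by (simp add: E_Suc)
  moreover have "e i * E (i + 2) j = 1 * E (i + 2) j * e i"
    using ij False by (simp add: e_E_commute_far)
  ultimately show ?thesis using qbr_qcommute_left[OF central_a central_b central_1] by simp
qed

lemma E_e_qcommute: "1 \<le> i \<Longrightarrow> i < j \<Longrightarrow> j < n \<Longrightarrow> E i j * e j = b * e j * E i j"
proof (cases "j = i + 1")
  case True
  assume "1 \<le> i" "i < j" "j < n"
  with True show ?thesis using serre_right[of i] by (simp add: E_Suc)
next
  case False
  assume ij: "1 \<le> i" "i < j" "j < n"
  have "E i j = qbr a (E i (j - 2)) (E (j - 1) j)"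
    using E_split[of i "j - 2" j] ij False by (simp add: Suc_diff_Suc numeral_2_eq_2)
  moreover have "E (j - 1) j * e j = b * e j * E (j - 1) j"
    using serre_right[of "j - 1"] ij False by (simp add: E_Suc)
  moreover have "E i (j - 2) * e j = 1 * e j * E i (j - 2)"
    using ij False e_E_commute_far[of i "j - 2" j] by simp
  ultimately show ?thesis using qbr_qcommute_right[OF central_a central_1 central_b] by simp
qed

lemma e_E_commute: "1 \<le> i \<Longrightarrow> i < l \<Longrightarrow> l < j \<Longrightarrow> j \<le> n \<Longrightarrow> e l * E i j = E i j * e l"
proof -
  assume h: "1 \<le> i" "i < l" "l < j" "j \<le> n"
  have Eil: "E i l = qbr a (E i (l - 1)) (e l)" using E_split[of i "l - 1" l] h by simp
  have Elj: "E l j = qbr a (e l) (E (l + 1) j)" using E_Suc[of l j] h by simp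
  have "E i j = qbr a (qbr a (E i (l - 1)) (e l)) (E (l + 1) j)"
    using E_split[of i l j] h Eil by simp
  moreover have "E i (l - 1) * E (l + 1) j = E (l + 1) j * E i (l - 1)"
    using h by (intro E_E_commute_far) auto
  moreover have "qbr a (E i (l - 1)) (e l) * e l = b * e l * qbr a (E i (l - 1)) (e l)"
    using E_e_qcommute[of i l] h Eil by simp
  moreover have "e l * qbr a (e l) (E (l + 1) j) = b * qbr a (e l) (E (l + 1) j) * e l"
    using e_E_qcommute[of l j] h Elj by simp
  ultimately show ?thesis using qbr_qbr_commute[OF central_a central_b cancel] by simp
qed

lemma E_E_qbr:
  "1 \<le> i \<Longrightarrow> i < l \<Longrightarrow> l < j \<Longrightarrow> j \<le> n
    \<Longrightarrow> qbr (a * b) (E i l) (E l j) = (b - a) * e l * E i j"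
proof -
  assume h: "1 \<le> i" "i < l" "l < j" "j \<le> n"
  have "E l j = qbr a (e l) (E (l + 1) j)" using E_Suc[of l j] h by simp
  moreover have "E i j = qbr a (E i l) (E (l + 1) j)" using E_split[of i l j] h by simp
  moreover have "E i l * e l = b * e l * E i l" using E_e_qcommute[of i l] h by simp
  moreover have "e l * E i j = E i j * e l" using e_E_commute[of i l j] h by simp
  ultimately show ?thesis using qbr_nested_eq[OF central_a central_b] by simp
qed

lemma E_E_commute:
  "1 \<le> i \<Longrightarrow> i < k \<Longrightarrow> k \<le> l \<Longrightarrow> l < j \<Longrightarrow> j \<le> n \<Longrightarrow> E i j * E k l = E k l * E i j"
proof (induction "l - k" arbitrary: k)
  case 0
  then show ?case using e_E_commute[of i k j] by simp
next
  case (Suc d)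
  have "E i j * e k = e k * E i j" using Suc.prems e_E_commute[of i k j] by simp
  moreover have "E i j * E (k + 1) l = E (k + 1) l * E i j"
    using Suc.prems Suc.hyps(2) by (intro Suc.hyps(1)) auto
  ultimately show ?case
    using Suc.hyps(2) by (simp add: E_Suc[of k l] qbr_commute_left[OF central_a])
qed

lemma E_E_qcommute_end:
  "1 \<le> i \<Longrightarrow> i < l \<Longrightarrow> l \<le> j \<Longrightarrow> j < n \<Longrightarrow> E i j * E l j = b * E l j * E i j"
proof (induction "j - l" arbitrary: l)
  case 0
  then show ?case using E_e_qcommute[of i j] by simp
next
  case (Suc d)
  have "E i j * e l = 1 * e l * E i j" using Suc.prems Suc.hyps(2) e_E_commute[of i l j] by simp
  moreover have "E i j * E (l + 1) j = b * E (l + 1) j * E i j"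
    using Suc.prems Suc.hyps(2) by (intro Suc.hyps(1)) auto
  ultimately show ?case using Suc.hyps(2)
    by (simp add: E_Suc[of l j] qbr_qcommute_left[OF central_a central_1 central_b])
qed

lemma E_E_qcommute_start:
  "1 \<le> i \<Longrightarrow> i \<le> l \<Longrightarrow> l < j \<Longrightarrow> j \<le> n \<Longrightarrow> E i l * E i j = b * E i j * E i l"
proof (induction "l - i" arbitrary: l)
  case 0
  then show ?case using e_E_qcommute[of i j] by simp
next
  case (Suc d)
  have "E i (l - 1) * E i j = b * E i j * E i (l - 1)"
    using Suc.prems Suc.hyps(2) by (intro Suc.hyps(1)) auto
  moreover have "e l * E i j = 1 * E i j * e l"
    using Suc.prems Suc.hyps(2) e_E_commute[of i l j] by simp
  moreover have "E i l = qbr a (E i (l - 1)) (e l)"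
    using E_split[of i "l - 1" l] Suc.prems Suc.hyps(2) by simp
  ultimately show ?case using qbr_qcommute_right[OF central_a central_b central_1] by simp
qed

end

fun qbr_chain_down :: "'a::ring_1 \<Rightarrow> 'a \<Rightarrow> (nat \<Rightarrow> 'a) \<Rightarrow> nat \<Rightarrow> 'a \<Rightarrow> nat \<Rightarrow> 'a" where
  "qbr_chain_down c d e n X 0 = qbr c X (e n)"
| "qbr_chain_down c d e n X (Suc k) = qbr d (qbr_chain_down c d e n X k) (e (n - Suc k))"

lemma qbr_chain_down_diff:
  "qbr_chain_down c d e n (X - Y) k = qbr_chain_down c d e n X k - qbr_chain_down c d e n Y k"
proof (induction k)
  case (Suc k)
  show ?case by (simp only: qbr_chain_down.simps Suc.IH) (simp add: qbr_def algebra_simps)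
qed (simp add: qbr_def algebra_simps)

lemma qbr_chain_down_mult_left:
  assumes c: "central c" and d: "central d"
    and u: "\<And>m. n - k \<le> m \<Longrightarrow> m \<le> n \<Longrightarrow> u * e m = e m * u"
  shows "qbr_chain_down c d e n (u * X) k = u * qbr_chain_down c d e n X k"
  using u
proof (induction k)
  case 0
  then have "u * e n = e n * u" by simp
  then have "e n * (u * t) = u * (e n * t)" for t by (metis mult.assoc)
  then show ?case by (simp add: qbr_def algebra_simps central_commute[OF c, of u])
next
  case (Suc k)
  have "u * e (n - Suc k) = e (n - Suc k) * u" using Suc.prems by simp
  then have "e (n - Suc k) * (u * t) = u * (e (n - Suc k) * t)" for t by (metis mult.assoc)
  moreover have "qbr_chain_down c d e n (u * X) k = u * qbr_chain_down c d e n X k"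
    using Suc.prems by (intro Suc.IH) auto
  ultimately show ?case by (simp add: qbr_def algebra_simps central_commute[OF d, of u])
qed

lemma qbr_chain_down_mult_right:
  assumes c: "central c" and d: "central d"
    and v: "\<And>m. n - k \<le> m \<Longrightarrow> m \<le> n \<Longrightarrow> v * e m = e m * v"
  shows "qbr_chain_down c d e n (X * v) k = qbr_chain_down c d e n X k * v"
  using v
proof (induction k)
  case 0
  then have "v * e n = e n * v" by simp
  then show ?case by (simp add: qbr_def algebra_simps central_commute[OF c, of v])
next
  case (Suc k)
  have "v * e (n - Suc k) = e (n - Suc k) * v" using Suc.prems by simp
  moreover have "qbr_chain_down c d e n (X * v) k = qbr_chain_down c d e n X k * v"
    using Suc.prems by (intro Suc.IH) auto
  ultimately show ?case by (simp add: qbr_def algebra_simps central_commute[OF d, of v])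
qed

lemma qbr_chain_down_qcommute:
  assumes c: "central c" and d: "central d" and g: "central g"
    and u: "\<And>m. n - k \<le> m \<Longrightarrow> m \<le> n \<Longrightarrow> u * e m = e m * u"
    and uX: "u * X = g * X * u"
  shows "u * qbr_chain_down c d e n X k = g * qbr_chain_down c d e n X k * u"
proof -
  have "u * qbr_chain_down c d e n X k = qbr_chain_down c d e n (u * X) k"
    by (rule qbr_chain_down_mult_left[OF c d u, symmetric])
  also have "\<dots> = qbr_chain_down c d e n (g * X * u) k"
    by (simp only: uX)
  also have "\<dots> = qbr_chain_down c d e n (g * X) k * u"
    by (rule qbr_chain_down_mult_right[OF c d u])
  also have "\<dots> = g * qbr_chain_down c d e n X k * u"
    by (simp only: qbr_chain_down_mult_left[OF c d central_commute(1)[OF g, symmetric]])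
  finally show ?thesis .
qed

locale qserre_chain_primed = qserre_chain +
  fixes c d :: 'a
  assumes central_c: "central c" and central_d: "central d"
begin

definition E' :: "nat \<Rightarrow> nat \<Rightarrow> 'a" where
  "E' i j = qbr_chain_down c d e n (E i n) (n - j)"

lemma e_E'_commute:
  assumes "1 \<le> i" "i < l" "l + 1 < j" "j \<le> n"
  shows "e l * E' i j = E' i j * e l"
proof -
  have "e l * e m = e m * e l" if "n - (n - j) \<le> m" "m \<le> n" for m
    using assms that by (intro e_commute) auto
  moreover have "e l * E i n = 1 * E i n * e l" using assms e_E_commute[of i l n] by simp
  ultimately show ?thesis
    unfolding E'_def using qbr_chain_down_qcommute[OF central_c central_d central_1] by simp
qed

lemma E'_E_commute:
  assumes "1 \<le> i" "i < k" "k \<le> l" "l + 1 < j" "j \<le> n"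
  shows "E' i j * E k l = E k l * E' i j"
proof -
  have "E k l * e m = e m * E k l" if "n - (n - j) \<le> m" "m \<le> n" for m
    using assms that e_E_commute_far[of k l m] by simp
  moreover have "E k l * E i n = 1 * E i n * E k l" using assms E_E_commute[of i k l n] by simp
  ultimately show ?thesis
    unfolding E'_def using qbr_chain_down_qcommute[OF central_c central_d central_1] by simp
qed

lemma E_E'_qcommute:
  assumes "1 \<le> i" "i \<le> l" "l + 1 < j" "j \<le> n"
  shows "E i l * E' i j = b * E' i j * E i l"
proof -
  have "E i l * e m = e m * E i l" if "n - (n - j) \<le> m" "m \<le> n" for m
    using assms that e_E_commute_far[of i l m] by simp
  moreover have "E i l * E i n = b * E i n * E i l" using assms E_E_qcommute_start[of i l n] by simp
  ultimately show ?thesis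
    unfolding E'_def using qbr_chain_down_qcommute[OF central_c central_d central_b] by simp
qed

lemma E_E'_qbr:
  assumes "1 \<le> i" "i < l" "l + 1 < j" "j \<le> n"
  shows "qbr (a * b) (E i l) (E' l j) = (b - a) * e l * E' i j"
proof -
  let ?T = "\<lambda>X. qbr_chain_down c d e n X (n - j)"
  have Eil: "E i l * e m = e m * E i l" if "n - (n - j) \<le> m" "m \<le> n" for m
    using assms that e_E_commute_far[of i l m] by simp
  have ab: "(a * b) * e m = e m * (a * b)" for m
    using central_commute(1)[OF central_mult[OF central_a central_b]] by simp
  have bael: "((b - a) * e l) * e m = e m * ((b - a) * e l)" if "n - (n - j) \<le> m" "m \<le> n" for m
  proof -
    have "e l * e m = e m * e l" using assms that by (intro e_commute) auto
    then show ?thesis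
      by (metis mult.assoc central_commute(1)[OF central_diff[OF central_b central_a]])
  qed
  have "qbr (a * b) (E i l) (E' l j) = ?T (qbr (a * b) (E i l) (E l n))"
    unfolding E'_def qbr_def
    by (simp add: qbr_chain_down_diff qbr_chain_down_mult_left[OF central_c central_d Eil]
      qbr_chain_down_mult_right[OF central_c central_d Eil]
      qbr_chain_down_mult_left[OF central_c central_d ab])
  also have "\<dots> = ?T ((b - a) * e l * E i n)" using assms E_E_qbr[of i l n] by simp
  also have "\<dots> = (b - a) * e l * E' i j"
    unfolding E'_def using qbr_chain_down_mult_left[OF central_c central_d bael] by simp
  finally show ?thesis .
qed

end

lemma conj_qbr:
  assumes "v * w = 1" and "central c"
  shows "w * qbr c x y * v = qbr c (w * x * v) (w * y * v)"
proof -
  have "v * (w * t) = t" for t by (metis assms(1) mult.assoc mult_1_left)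
  then show ?thesis
    by (simp add: qbr_def algebra_simps central_commute[OF assms(2), of w])
qed

lemma ad_l_eq_qbr: "w i * X * winv i = c * X \<Longrightarrow> ad_l e w winv i X = qbr c (e i) X"
  by (simp add: ad_l_def qbr_def)

lemma Kfield_power: "x \<in> Kfield r s \<Longrightarrow> x ^ k \<in> Kfield r s"
  by (induction k) (auto intro: Kfield.intros)

lemma Kfield_diff: "x \<in> Kfield r s \<Longrightarrow> y \<in> Kfield r s \<Longrightarrow> x - y \<in> Kfield r s"
  by (metis Kfield.K_add Kfield.K_uminus diff_conv_add_uminus)

lemma pairing_in_Kfield: "pairing n r s i j \<in> Kfield r s"
  by (simp add: pairing_def Kfield.intros Kfield_power)

context
  fixes r s :: complex and sc :: "complex \<Rightarrow> 'a::ring_1"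
  assumes K: "K_algebra r s sc"
begin

lemma K_algebra_add: "x \<in> Kfield r s \<Longrightarrow> y \<in> Kfield r s \<Longrightarrow> sc (x + y) = sc x + sc y"
  using K unfolding K_algebra_def by blast

lemma K_algebra_mult: "x \<in> Kfield r s \<Longrightarrow> y \<in> Kfield r s \<Longrightarrow> sc (x * y) = sc x * sc y"
  using K unfolding K_algebra_def by blast

lemma K_algebra_central: "x \<in> Kfield r s \<Longrightarrow> central (sc x)"
  using K unfolding K_algebra_def central_def by metis

lemma K_algebra_diff: "x \<in> Kfield r s \<Longrightarrow> y \<in> Kfield r s \<Longrightarrow> sc (x - y) = sc x - sc y"
  by (metis K_algebra_add Kfield_diff add_diff_cancel diff_add_cancel)

lemma K_algebra_inverse_mult: "x \<in> Kfield r s \<Longrightarrow> x \<noteq> 0 \<Longrightarrow> sc (inverse x) * sc x = 1"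
proof -
  assume "x \<in> Kfield r s" "x \<noteq> 0"
  then have "sc (inverse x) * sc x = sc (inverse x * x)"
    by (intro K_algebra_mult[symmetric] Kfield.K_inverse)
  also have "\<dots> = 1" using K \<open>x \<noteq> 0\<close> unfolding K_algebra_def by simp
  finally show ?thesis .
qed

lemma K_algebra_cancel:
  assumes "x \<in> Kfield r s" "x \<noteq> 0" "sc x * X = 0"
  shows "X = 0"
proof -
  have "X = sc (inverse x) * sc x * X" using K_algebra_inverse_mult assms by simp
  then show ?thesis using assms(3) by (simp add: mult.assoc)
qed

end

context
  fixes n :: nat and r s :: complex and sc :: "complex \<Rightarrow> 'a::ring_1"
    and e f w w' winv w'inv :: "nat \<Rightarrow> 'a"
  assumes U: "Urs_relations n r s sc e f w w' winv w'inv"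
begin

lemma Urs_K_algebra: "K_algebra r s sc"
  using U unfolding Urs_relations_def by blast

lemma Urs_winv_w: "1 \<le> i \<Longrightarrow> i \<le> n \<Longrightarrow> winv i * w i = 1"
  using U unfolding Urs_relations_def by auto

lemma Urs_conj_e:
  "1 \<le> i \<Longrightarrow> i \<le> n \<Longrightarrow> 1 \<le> j \<Longrightarrow> j \<le> n
    \<Longrightarrow> w j * e i * winv j = sc (pairing n r s i j) * e i"
  using U unfolding Urs_relations_def by auto

lemma Urs_serre:
  "1 \<le> i \<Longrightarrow> i \<le> n \<Longrightarrow> 1 \<le> j \<Longrightarrow> j \<le> n \<Longrightarrow> i \<noteq> j
    \<Longrightarrow> (ad_l e w winv i ^^ nat (1 - cartan_B n i j)) (e j) = 0"
  using U unfolding Urs_relations_def by auto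

lemma Urs_ad_l_e:
  "1 \<le> i \<Longrightarrow> i \<le> n \<Longrightarrow> 1 \<le> j \<Longrightarrow> j \<le> n
    \<Longrightarrow> ad_l e w winv i (e j) = qbr (sc (pairing n r s j i)) (e i) (e j)"
  by (intro ad_l_eq_qbr Urs_conj_e)

lemma Urs_ad_l_ad_l_e:
  assumes "1 \<le> i" "i \<le> n" "1 \<le> j" "j \<le> n"
  defines "p \<equiv> sc (pairing n r s j i)" and "P \<equiv> sc (pairing n r s i i)"
  shows "ad_l e w winv i (ad_l e w winv i (e j)) = qbr (P * p) (e i) (qbr p (e i) (e j))"
proof -
  have p: "central p" and P: "central P"
    unfolding p_def P_def by (simp_all add: K_algebra_central[OF Urs_K_algebra] pairing_in_Kfield)
  have "w i * qbr p (e i) (e j) * winv i = qbr p (P * e i) (p * e j)"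
    using conj_qbr[OF Urs_winv_w[OF assms(1,2)] p] Urs_conj_e[OF assms(1,2,1,2)]
      Urs_conj_e[OF assms(3,4,1,2)]
    unfolding P_def p_def by simp
  also have "\<dots> = (P * p) * qbr p (e i) (e j)"
    by (simp add: qbr_mult_left[OF p P] qbr_mult_right[OF p p] mult.assoc central_commute(2)[OF P])
  finally show ?thesis
    unfolding Urs_ad_l_e[OF assms(1-4)] p_def[symmetric] by (rule ad_l_eq_qbr)
qed

lemma Urs_e_commute:
  assumes "1 \<le> i" "i + 1 < j" "j \<le> n"
  shows "e i * e j = e j * e i"
proof -
  have "cartan_B n i j = 0" and "pairing n r s j i = 1"
    using assms by (auto simp: cartan_B_def pairing_def)
  moreover have "sc 1 = 1" using Urs_K_algebra by (simp add: K_algebra_def)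
  ultimately have "qbr 1 (e i) (e j) = 0"
    using Urs_serre[of i j] Urs_ad_l_e[of i j] assms by simp
  then show ?thesis by (simp add: qbr_eq_0_iff)
qed

lemma Urs_ad_l_ad_l_e_eq_0:
  assumes "1 \<le> i" "i \<le> n" "1 \<le> j" "j \<le> n" "cartan_B n i j = -1"
  shows "ad_l e w winv i (ad_l e w winv i (e j)) = 0"
proof -
  have "i \<noteq> j" using assms(5) by (auto simp: cartan_B_def)
  from Urs_serre[OF assms(1-4) this] assms(5) show ?thesis by (simp add: numeral_2_eq_2)
qed

lemma Urs_serre_left:
  assumes "s \<noteq> 0" "1 \<le> i" "i < n"
  shows "e i * qbr (sc (r^2)) (e i) (e (i + 1))
    = sc (s^2) * qbr (sc (r^2)) (e i) (e (i + 1)) * e i"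
proof -
  have K: "r^2 \<in> Kfield r s" "s^2 \<in> Kfield r s" "r^2 * inverse (s^2) \<in> Kfield r s"
    by (simp_all add: Kfield.intros Kfield_power)
  note central = K_algebra_central[OF Urs_K_algebra]
  have "sc (r^2 * inverse (s^2)) * sc (s^2) = sc (r^2 * inverse (s^2) * s^2)"
    by (rule K_algebra_mult[OF Urs_K_algebra K(3,2), symmetric])
  also have "r^2 * inverse (s^2) * s^2 = r^2" using assms(1) by simp
  finally have "sc (r^2 * inverse (s^2)) * sc (s^2) = sc (r^2)" .
  moreover have "cartan_B n i (i + 1) = -1" using assms(3) by (auto simp: cartan_B_def)
  ultimately have "qbr (sc (r^2)) (e i) (qbr (sc (s^2)) (e i) (e (i + 1))) = 0"
    using Urs_ad_l_ad_l_e_eq_0[of i "i + 1"] Urs_ad_l_ad_l_e[of i "i + 1"] assms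
    by (simp add: pairing_def)
  then have "qbr (sc (s^2)) (e i) (qbr (sc (r^2)) (e i) (e (i + 1))) = 0"
    by (simp add: qbr_swap[OF central[OF K(2)] central[OF K(1)]])
  then show ?thesis by (simp add: qbr_eq_0_iff)
qed

lemma Urs_serre_right:
  assumes "r \<noteq> 0" "s \<noteq> 0" "1 \<le> i" "i + 1 < n"
  shows "qbr (sc (r^2)) (e i) (e (i + 1)) * e (i + 1)
    = sc (s^2) * e (i + 1) * qbr (sc (r^2)) (e i) (e (i + 1))"
proof -
  define a b g d where "a = sc (r^2)" and "b = sc (s^2)"
    and "g = sc (inverse (r^2))" and "d = sc (inverse (s^2))"
  define Y where "Y = qbr a (e i) (e (i + 1))"
  have K: "r^2 \<in> Kfield r s" "s^2 \<in> Kfield r s" "inverse (r^2) \<in> Kfield r s"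
    "inverse (s^2) \<in> Kfield r s" "r^2 * inverse (s^2) \<in> Kfield r s"
    "inverse (r^2) * inverse (s^2) \<in> Kfield r s"
    by (simp_all add: Kfield.intros Kfield_power)
  note central = K_algebra_central[OF Urs_K_algebra]
  note inverse_mult = K_algebra_inverse_mult[OF Urs_K_algebra]
  have "sc (r^2 * inverse (s^2)) * g = sc (r^2 * inverse (s^2) * inverse (r^2))"
    unfolding g_def by (rule K_algebra_mult[OF Urs_K_algebra K(5,3), symmetric])
  also have "r^2 * inverse (s^2) * inverse (r^2) = inverse (s^2)" using assms(1) by simp
  finally have "sc (r^2 * inverse (s^2)) * g = d" unfolding d_def .
  moreover have "cartan_B n (i + 1) i = -1" using assms(4) by (auto simp: cartan_B_def)
  ultimately have "qbr d (e (i + 1)) (qbr g (e (i + 1)) (e i)) = 0"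
    using Urs_ad_l_ad_l_e_eq_0[of "i + 1" i] Urs_ad_l_ad_l_e[of "i + 1" i] assms
    by (simp add: pairing_def g_def)
  moreover have "qbr g (e (i + 1)) (e i) = - g * Y"
    unfolding Y_def using qbr_flip[OF central[OF K(1)], of g] inverse_mult[OF K(1)] assms(1)
    by (simp add: a_def g_def)
  moreover have "qbr d (e (i + 1)) Y = - d * qbr b Y (e (i + 1))"
    using qbr_flip[OF central[OF K(2)], of d] inverse_mult[OF K(2)] assms(2)
    by (simp add: b_def d_def)
  ultimately have "(g * d) * qbr b Y (e (i + 1)) = 0"
    using qbr_mult_right[OF central[OF K(4)] central_uminus[OF central[OF K(3)]]]
    by (simp add: d_def g_def mult.assoc)
  then have "sc (inverse (r^2) * inverse (s^2)) * qbr b Y (e (i + 1)) = 0"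
    using K_algebra_mult[OF Urs_K_algebra K(3,4)] unfolding g_def d_def by simp
  then have "qbr b Y (e (i + 1)) = 0"
    using K_algebra_cancel[OF Urs_K_algebra K(6)] assms(1,2) by simp
  then show ?thesis by (simp add: qbr_eq_0_iff Y_def a_def b_def)
qed

end

lemma rootE_eq_qroot: "rootE sc r e i j = qroot (sc (r^2)) e i (j - i)"
proof -
  have "rootE_rec sc r e i k = qroot (sc (r^2)) e i k" for k
    by (induction k arbitrary: i) (simp_all add: qbr_def)
  then show ?thesis by (simp add: rootE_def)
qed

lemma rootE'_eq_qbr_chain_down:
  "rootE' n sc r s e i j
    = qbr_chain_down (sc (r * s)) (sc (inverse (s^2))) e n (rootE sc r e i n) (n - j)"
proof -
  have "rootE'_rec n sc r s e i k
      = qbr_chain_down (sc (r * s)) (sc (inverse (s^2))) e n (rootE sc r e i n) k" for k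
    by (induction k) (simp_all add: qbr_def)
  then show ?thesis by (simp add: rootE'_def)
qed

lemma Urs_qserre_chain_primed:
  assumes "r \<noteq> 0" and "s \<noteq> 0" and "r^4 \<noteq> s^4"
    and U: "Urs_relations n r s sc e f w w' winv w'inv"
  shows "qserre_chain_primed n e (sc (r^2)) (sc (s^2)) (sc (r * s)) (sc (inverse (s^2)))"
proof -
  have K: "r^2 \<in> Kfield r s" "s^2 \<in> Kfield r s" "r * s \<in> Kfield r s"
    "inverse (s^2) \<in> Kfield r s"
    by (simp_all add: Kfield.intros Kfield_power)
  note KA = Urs_K_algebra[OF U]
  have "r^2 + s^2 \<noteq> 0"
  proof
    assume "r^2 + s^2 = 0"
    moreover have "r^4 - s^4 = (r^2 + s^2) * (r^2 - s^2)"
      by (simp add: algebra_simps power2_eq_square power4_eq_xxxx)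
    ultimately show False using assms(3) by simp
  qed
  then have cancel: "(sc (r^2) + sc (s^2)) * X = 0 \<Longrightarrow> X = 0" for X
    using K_algebra_cancel[OF KA Kfield.K_add[OF K(1,2)]] K_algebra_add[OF KA K(1,2)] by simp
  show ?thesis
    by unfold_locales
      (fact K_algebra_central[OF KA K(1)] K_algebra_central[OF KA K(2)] cancel
        Urs_e_commute[OF U] Urs_serre_left[OF U assms(2)] Urs_serre_right[OF U assms(1,2)]
        K_algebra_central[OF KA K(3)] K_algebra_central[OF KA K(4)])+
qed

theorem lemma3p3:
  fixes n :: nat and r s :: complex and sc :: "complex \<Rightarrow> 'a::ring_1"
    and e f w w' winv w'inv :: "nat \<Rightarrow> 'a"
  assumes "n \<ge> 2" and "r \<noteq> 0" and "s \<noteq> 0" and "r^3 \<noteq> s^3" and "r^4 \<noteq> s^4"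
    and "Urs_relations n r s sc e f w w' winv w'inv"
  defines "E \<equiv> rootE sc r e" and "E' \<equiv> rootE' n sc r s e"
  shows
    "(\<forall>i l j. 1 \<le> i \<and> i < l \<and> l < j \<and> j \<le> n \<longrightarrow> e l * E i j = E i j * e l)
   \<and> (\<forall>i l j. 1 \<le> i \<and> i < l \<and> l < j \<and> j \<le> n \<longrightarrow>
        E i l * E l j - sc ((r * s)^2) * E l j * E i l = sc (s^2 - r^2) * e l * E i j)
   \<and> (\<forall>i k l j. 1 \<le> i \<and> i < k \<and> k \<le> l \<and> l < j \<and> j \<le> n \<longrightarrow> E i j * E k l = E k l * E i j)
   \<and> (\<forall>i l j. 1 \<le> i \<and> i < l \<and> l \<le> j \<and> j < n \<longrightarrow> E i j * E l j = sc (s^2) * E l j * E i j)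
   \<and> (\<forall>i l j. 1 \<le> i \<and> i \<le> l \<and> l < j \<and> j \<le> n \<longrightarrow> E i l * E i j = sc (s^2) * E i j * E i l)
   \<and> (\<forall>i l j. 1 \<le> i \<and> i < l \<and> l + 1 < j \<and> j \<le> n \<longrightarrow> e l * E' i j = E' i j * e l)
   \<and> (\<forall>i l j. 1 \<le> i \<and> i < l \<and> l + 1 < j \<and> j \<le> n \<longrightarrow>
        E i l * E' l j - sc ((r * s)^2) * E' l j * E i l = sc (s^2 - r^2) * e l * E' i j)
   \<and> (\<forall>i k l j. 1 \<le> i \<and> i < k \<and> k \<le> l \<and> l + 1 < j \<and> j \<le> n \<longrightarrow> E' i j * E k l = E k l * E' i j)
   \<and> (\<forall>i l j. 1 \<le> i \<and> i \<le> l \<and> l + 1 < j \<and> j \<le> n \<longrightarrow> E i l * E' i j = sc (s^2) * E' i j * E i l)"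
proof -
  interpret R: qserre_chain_primed n e "sc (r^2)" "sc (s^2)" "sc (r * s)" "sc (inverse (s^2))"
    using Urs_qserre_chain_primed assms(2,3,5,6) .
  have E: "E = R.E" and E': "E' = R.E'"
    by (simp_all add: fun_eq_iff E_def E'_def R.E_def R.E'_def
      rootE_eq_qroot rootE'_eq_qbr_chain_down)
  have K: "r^2 \<in> Kfield r s" "s^2 \<in> Kfield r s"
    by (simp_all add: Kfield.intros Kfield_power)
  note KA = Urs_K_algebra[OF assms(6)]
  have "sc ((r * s)^2) = sc (r^2) * sc (s^2)"
    using K_algebra_mult[OF KA K] by (simp add: power_mult_distrib)
  moreover have "sc (s^2 - r^2) = sc (s^2) - sc (r^2)"
    by (rule K_algebra_diff[OF KA K(2,1)])
  ultimately show ?thesis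
    using R.e_E_commute R.E_E_qbr R.E_E_commute R.E_E_qcommute_end R.E_E_qcommute_start
      R.e_E'_commute R.E_E'_qbr R.E'_E_commute R.E_E'_qcommute
    unfolding E E' qbr_def by (simp; blast)
qed

end
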